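(* Let $n\geq 1$, $m=\frac{n^2+n}{2}$, and let $z:\mathbb{R}^n\to\mathbb{R}^m$ be the map $z(x)=\begin{bmatrix}x_1^2 & x_1x_2 & \cdots & x_1x_n & x_2^2 & x_2x_3 & \cdots & x_n^2\end{bmatrix}^\top$ listing all quadratic monomials of $x$. Let $E=E^\top\in\mathbb{R}^{n\times n}$ be positive definite, $\alpha>0$, and $\mathcal{E}_\alpha=\{x : x^\top E x\leq\alpha^2\}$. Let $c_1,c_2\in\mathbb{R}^n$ be two nonzero, linearly independent vectors, and define $\phi(x)=x^\top Q x$ with $Q=\frac12(c_1c_2^\top+c_2c_1^\top)$. Then there exists $b\in\mathbb{R}^m$ such that $\phi(x)=b^\top z(x)$ for all $x$. Moreover, for $W$ equal to either $(c_2^\top E^{-1}c_2)\,c_1c_1^\top$ or $(c_1^\top E^{-1}c_1)\,c_2c_2^\top$, we have $$\begin{bmatrix} x\\ w\end{bmatrix}^\top\begin{bmatrix}\alpha^2 W & 0\\ 0 & -bb^\top\end{bmatrix}\begin{bmatrix} x\\ w\end{bmatrix}\geq 0\quad\text{for all } x\in\mathcal{E}_\alpha,\ w=z(x).$$ *)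

theory Defs
  imports "HOL-Analysis.Analysis"
begin

text \<open>Index set of the quadratic monomials x_i x_j with i \<le> j (m = (n^2+n)/2 elements).
  A vector in R^m is represented as a function on this index set.\<close>
definition monomial_index :: "('n::{finite,linorder} \<times> 'n) set" where
  "monomial_index = {(i, j). i \<le> j}"

definition zmap :: "real ^ ('n::{finite,linorder}) \<Rightarrow> ('n \<times> 'n \<Rightarrow> real)" where
  "zmap x = (\<lambda>(i, j). x $ i * x $ j)"

definition mdot :: "('n::{finite,linorder} \<times> 'n \<Rightarrow> real) \<Rightarrow> ('n \<times> 'n \<Rightarrow> real) \<Rightarrow> real" where
  "mdot b w = (\<Sum>p\<in>monomial_index. b p * w p)"

definition outer :: "real ^ 'n \<Rightarrow> real ^ 'n \<Rightarrow> real ^ 'n ^ 'n" where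
  "outer u v = (\<chi> i j. u $ i * v $ j)"

definition pos_def :: "real ^ 'n ^ 'n \<Rightarrow> bool" where
  "pos_def E \<longleftrightarrow> transpose E = E \<and> (\<forall>x. x \<noteq> 0 \<longrightarrow> x \<bullet> (E *v x) > 0)"

end

theory Submission
  imports Defs
begin

text \<open>Every quadratic form is a linear function of the monomial vector, so \<open>\<phi>\<close> is
  represented by some \<open>b\<close>, and \<open>b\<^sup>T z(x) = \<phi>(x) = (c\<^sub>1 \<bullet> x) (c\<^sub>2 \<bullet> x)\<close>.
  Cauchy--Schwarz for the inner product defined by \<open>E\<close>, applied to \<open>c \<bullet> x = (E\<^sup>-\<^sup>1 c)\<^sup>T E x\<close>,
  gives \<open>(c \<bullet> x)\<^sup>2 \<le> (c\<^sup>T E\<^sup>-\<^sup>1 c) (x\<^sup>T E x) \<le> \<alpha>\<^sup>2 (c\<^sup>T E\<^sup>-\<^sup>1 c)\<close> on the ellipsoid.  Bounding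
  one factor of \<open>\<phi>(x)\<^sup>2 = (c\<^sub>1 \<bullet> x)\<^sup>2 (c\<^sub>2 \<bullet> x)\<^sup>2\<close> this way yields \<open>\<phi>(x)\<^sup>2 \<le> \<alpha>\<^sup>2 x\<^sup>T W x\<close> for
  either choice of \<open>W\<close>.\<close>

lemma quadratic_nonneg_imp_leading_nonneg:
  fixes a b c :: real
  assumes nonneg: "\<And>t. 0 \<le> a * t\<^sup>2 + b * t + c"
  shows "0 \<le> a"
proof (rule ccontr)
  assume "\<not> 0 \<le> a"
  define t where "t = (\<bar>b\<bar> + \<bar>c\<bar> + 1) / - a + 1"
  have "a * t = - (\<bar>b\<bar> + \<bar>c\<bar> + 1) + a"
    using \<open>\<not> 0 \<le> a\<close> by (simp add: t_def field_simps)
  then have neg: "a * t + b \<le> - (\<bar>c\<bar> + 1)"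
    using \<open>\<not> 0 \<le> a\<close> by linarith
  moreover have "1 \<le> t"
    using \<open>\<not> 0 \<le> a\<close> by (simp add: t_def divide_nonneg_neg)
  ultimately have "t * (a * t + b) \<le> a * t + b"
    using mult_right_mono_neg[of 1 t "a * t + b"] by simp
  moreover have "a * t\<^sup>2 + b * t + c = t * (a * t + b) + c"
    by (simp add: power2_eq_square algebra_simps)
  ultimately show False
    using nonneg[of t] neg by linarith
qed

lemma quadratic_nonneg_imp_discrim_le:
  fixes a b c :: real
  assumes nonneg: "\<And>t. 0 \<le> a * t\<^sup>2 + b * t + c"
  shows "b\<^sup>2 \<le> 4 * a * c"
proof (cases "a = 0")
  case True
  have "b = 0"
  proof (rule ccontr)
    assume "b \<noteq> 0"
    then show False
      using nonneg[of "- (c + 1) / b"] True by (simp add: field_simps)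
  qed
  with True show ?thesis by simp
next
  case False
  have "0 \<le> a * (- b / (2 * a))\<^sup>2 + b * (- b / (2 * a)) + c"
    by (rule nonneg)
  also have "\<dots> = (4 * a * c - b\<^sup>2) / (4 * a)"
    using False by (simp add: field_simps power2_eq_square)
  finally show ?thesis
    using quadratic_nonneg_imp_leading_nonneg[OF nonneg] False
    by (simp add: zero_le_divide_iff)
qed

lemma symmetric_matrix_inner_swap:
  fixes E :: "real ^ 'n ^ 'n"
  assumes "transpose E = E"
  shows "x \<bullet> (E *v y) = y \<bullet> (E *v x)"
  by (metis assms dot_lmul_matrix inner_commute transpose_matrix_vector)

lemma psd_cauchy_schwarz:
  fixes E :: "real ^ 'n ^ 'n"
  assumes sym: "transpose E = E" and psd: "\<And>v. 0 \<le> v \<bullet> (E *v v)"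
  shows "(x \<bullet> (E *v y))\<^sup>2 \<le> (x \<bullet> (E *v x)) * (y \<bullet> (E *v y))"
proof -
  have "0 \<le> (y \<bullet> (E *v y)) * t\<^sup>2 + (2 * (x \<bullet> (E *v y))) * t + x \<bullet> (E *v x)" for t
  proof -
    have "(x + t *\<^sub>R y) \<bullet> (E *v (x + t *\<^sub>R y))
        = (y \<bullet> (E *v y)) * t\<^sup>2 + (2 * (x \<bullet> (E *v y))) * t + x \<bullet> (E *v x)"
      using symmetric_matrix_inner_swap[OF sym, of y x]
      by (simp add: matrix_vector_right_distrib matrix_vector_mult_scaleR
          inner_add_left inner_add_right algebra_simps power2_eq_square)
    then show ?thesis using psd by metis
  qed
  from quadratic_nonneg_imp_discrim_le[OF this] show ?thesis
    by (simp add: power_mult_distrib mult.commute)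
qed

lemma pos_def_psd:
  assumes "pos_def E"
  shows "0 \<le> v \<bullet> (E *v v)"
  using assms unfolding pos_def_def
  by (metis inner_zero_left less_eq_real_def matrix_vector_mult_0_right)

lemma pos_def_invertible:
  fixes E :: "real ^ 'n ^ 'n"
  assumes "pos_def E"
  shows "invertible E"
proof -
  have "x = 0" if "E *v x = 0" for x
    using assms that unfolding pos_def_def by force
  then show ?thesis
    using invertible_left_inverse matrix_left_invertible_ker by blast
qed

lemma matrix_vector_mult_matrix_inv_cancel:
  fixes A :: "real ^ 'n ^ 'n"
  assumes "invertible A"
  shows "A *v (matrix_inv A *v v) = v"
proof -
  have "A ** matrix_inv A = mat 1 \<and> matrix_inv A ** A = mat 1"
    using assms unfolding invertible_def matrix_inv_def by (rule someI_ex)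
  then show ?thesis
    by (simp add: matrix_vector_mul_assoc)
qed

lemma inner_sq_le_matrix_inv_form:
  fixes E :: "real ^ 'n ^ 'n"
  assumes pd: "pos_def E"
  shows "(c \<bullet> x)\<^sup>2 \<le> (c \<bullet> (matrix_inv E *v c)) * (x \<bullet> (E *v x))"
proof -
  define y where "y = matrix_inv E *v c"
  have sym: "transpose E = E"
    using pd unfolding pos_def_def by blast
  have Ey: "E *v y = c"
    unfolding y_def by (rule matrix_vector_mult_matrix_inv_cancel[OF pos_def_invertible[OF pd]])
  have "(y \<bullet> (E *v x))\<^sup>2 \<le> (y \<bullet> (E *v y)) * (x \<bullet> (E *v x))"
    by (rule psd_cauchy_schwarz[OF sym pos_def_psd[OF pd]])
  moreover have "y \<bullet> (E *v x) = c \<bullet> x"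
    using symmetric_matrix_inner_swap[OF sym, of y x] Ey by (simp add: inner_commute)
  moreover have "y \<bullet> (E *v y) = c \<bullet> y"
    using Ey by (simp add: inner_commute)
  ultimately show ?thesis
    by (simp add: y_def)
qed

lemma matrix_inv_form_nonneg:
  fixes E :: "real ^ 'n ^ 'n"
  assumes "pos_def E"
  shows "0 \<le> c \<bullet> (matrix_inv E *v c)"
  using pos_def_psd[OF assms, of "matrix_inv E *v c"]
  by (simp add: matrix_vector_mult_matrix_inv_cancel[OF pos_def_invertible[OF assms]] inner_commute)

definition monomial_coeffs ::
    "real ^ ('n::{finite,linorder}) ^ ('n::{finite,linorder}) \<Rightarrow> 'n \<times> 'n \<Rightarrow> real" where
  "monomial_coeffs A = (\<lambda>(i, j). if i = j then A $ i $ i else A $ i $ j + A $ j $ i)"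

lemma quadratic_form_eq_mdot_zmap:
  fixes A :: "real ^ ('n::{finite,linorder}) ^ ('n::{finite,linorder})"
  shows "x \<bullet> (A *v x) = mdot (monomial_coeffs A) (zmap x)"
proof -
  define g where "g = (\<lambda>(i::'n, j). A $ i $ j * (x $ i * x $ j))"
  define L where "L = {(i::'n, j::'n). j < i}"
  have "x \<bullet> (A *v x) = (\<Sum>p\<in>UNIV. g p)"
    by (simp add: g_def inner_vec_def matrix_vector_mult_def sum_distrib_left
        sum.cartesian_product UNIV_Times_UNIV[symmetric] algebra_simps del: UNIV_Times_UNIV)
  also have "UNIV = monomial_index \<union> L"
    by (auto simp: L_def monomial_index_def)
  also have "(\<Sum>p\<in>monomial_index \<union> L. g p) = (\<Sum>p\<in>monomial_index. g p) + (\<Sum>p\<in>L. g p)"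
    by (rule sum.union_disjoint) (auto simp: L_def monomial_index_def)
  also have "(\<Sum>p\<in>L. g p) = (\<Sum>p\<in>{p. fst p < snd p}. g (prod.swap p))"
    by (rule sum.reindex_bij_witness[of _ prod.swap prod.swap]) (auto simp: L_def)
  also have "\<dots> = (\<Sum>p\<in>monomial_index. if fst p < snd p then g (prod.swap p) else 0)"
    by (rule sum.mono_neutral_cong_left) (auto simp: monomial_index_def)
  also have "(\<Sum>p\<in>monomial_index. g p) + \<dots> = mdot (monomial_coeffs A) (zmap x)"
    unfolding mdot_def sum.distrib[symmetric]
    by (rule sum.cong) (auto simp: monomial_index_def monomial_coeffs_def zmap_def g_def algebra_simps)
  finally show ?thesis .
qed

lemma quadratic_form_outer:
  fixes u v x :: "real ^ 'n"
  shows "x \<bullet> (outer u v *v x) = (u \<bullet> x) * (v \<bullet> x)"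
proof -
  have "x \<bullet> (outer u v *v x) = (\<Sum>i\<in>UNIV. \<Sum>j\<in>UNIV. u $ i * x $ i * (v $ j * x $ j))"
    by (simp add: outer_def inner_vec_def matrix_vector_mult_def sum_distrib_left algebra_simps)
  then show ?thesis
    by (simp add: inner_vec_def sum_product)
qed

lemma product_sq_le_on_ellipsoid:
  fixes E :: "real ^ 'n ^ 'n"
  assumes pd: "pos_def E" and x: "x \<bullet> (E *v x) \<le> r"
  shows "((d \<bullet> x) * (c \<bullet> x))\<^sup>2 \<le> r * ((c \<bullet> (matrix_inv E *v c)) * (d \<bullet> x)\<^sup>2)"
proof -
  have "(c \<bullet> x)\<^sup>2 \<le> (c \<bullet> (matrix_inv E *v c)) * r"
    using inner_sq_le_matrix_inv_form[OF pd, of c x]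
      mult_left_mono[OF x matrix_inv_form_nonneg[OF pd, of c]] by linarith
  then have "(d \<bullet> x)\<^sup>2 * (c \<bullet> x)\<^sup>2 \<le> (d \<bullet> x)\<^sup>2 * ((c \<bullet> (matrix_inv E *v c)) * r)"
    by (rule mult_left_mono) simp
  then show ?thesis
    by (simp add: power_mult_distrib algebra_simps)
qed

theorem theorem2:
  fixes E :: "real ^ ('n::{finite,linorder}) ^ ('n::{finite,linorder})"
    and c1 c2 :: "real ^ ('n::{finite,linorder})"
    and \<alpha> :: real
  assumes E_pd: "pos_def E"
    and alpha_pos: "\<alpha> > 0"
    and c1_nz: "c1 \<noteq> 0" and c2_nz: "c2 \<noteq> 0"
    and lin_indep: "\<forall>a b :: real. a *\<^sub>R c1 + b *\<^sub>R c2 = 0 \<longrightarrow> a = 0 \<and> b = 0"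
  shows "\<exists>b :: ('n::{finite,linorder}) \<times> ('n::{finite,linorder}) \<Rightarrow> real.
           (\<forall>x :: real ^ ('n::{finite,linorder}).
              x \<bullet> (((1/2) *\<^sub>R (outer c1 c2 + outer c2 c1)) *v x) = mdot b (zmap x))
         \<and> (\<forall>W \<in> { (c2 \<bullet> (matrix_inv E *v c2)) *\<^sub>R outer c1 c1,
                    (c1 \<bullet> (matrix_inv E *v c1)) *\<^sub>R outer c2 c2 }.
              \<forall>x :: real ^ ('n::{finite,linorder}). \<forall>w. x \<bullet> (E *v x) \<le> \<alpha>\<^sup>2 \<longrightarrow> w = zmap x \<longrightarrow>
                \<alpha>\<^sup>2 * (x \<bullet> (W *v x)) - (mdot b w)\<^sup>2 \<ge> 0)"
proof -
  define Q where "Q = (1/2) *\<^sub>R (outer c1 c2 + outer c2 c1)"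
  define b where "b = monomial_coeffs Q"
  have Q_eq_mdot: "x \<bullet> (Q *v x) = mdot b (zmap x)" for x
    unfolding b_def by (rule quadratic_form_eq_mdot_zmap)
  have mdot_b_eq_product: "mdot b (zmap x) = (c1 \<bullet> x) * (c2 \<bullet> x)" for x
    by (simp add: Q_eq_mdot[symmetric] Q_def scaleR_matrix_vector_assoc[symmetric]
        matrix_vector_mult_add_rdistrib inner_add_right quadratic_form_outer)
  have scaled_outer_form: "x \<bullet> ((s *\<^sub>R outer c c) *v x) = s * (c \<bullet> x)\<^sup>2" for s c x
    by (simp add: scaleR_matrix_vector_assoc[symmetric] quadratic_form_outer power2_eq_square)
  have "\<alpha>\<^sup>2 * (x \<bullet> (W *v x)) - (mdot b (zmap x))\<^sup>2 \<ge> 0"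
    if "W \<in> {(c2 \<bullet> (matrix_inv E *v c2)) *\<^sub>R outer c1 c1, (c1 \<bullet> (matrix_inv E *v c1)) *\<^sub>R outer c2 c2}"
      and "x \<bullet> (E *v x) \<le> \<alpha>\<^sup>2" for W x
    using that product_sq_le_on_ellipsoid[OF E_pd \<open>x \<bullet> (E *v x) \<le> \<alpha>\<^sup>2\<close>, of c1 c2]
      product_sq_le_on_ellipsoid[OF E_pd \<open>x \<bullet> (E *v x) \<le> \<alpha>\<^sup>2\<close>, of c2 c1]
    by (auto simp: scaled_outer_form mdot_b_eq_product mult.commute)
  then show ?thesis
    using Q_eq_mdot unfolding Q_def by blast
qed

end
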